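(* Let $s\ge 2$, $q=s-1$, and let $c_1,\dots,c_s$ be pairwise distinct real nodes. Let $A,K\in\mathbb{R}^{s\times s}$ and let $B(\sigma)\in\mathbb{R}^{s\times s}$ be given for all $\sigma$ in a set $\Sigma\subset(0,\infty)$ with $1\in\Sigma$, such that for all $\sigma\in\Sigma$ the standard-method order conditions $$AV_q-KV_q\tilde E_q=B(\sigma)V_q\mathcal{P}_q^{-1}S_q(\sigma)^{-1},\qquad A^{\mathsf T}V_q+KV_q\tilde E_q=B(\sigma)^{\mathsf T}V_qS_q(\sigma)\mathcal{P}_q$$ hold, and assume moreover $\mathcal{Q}_{q,q}(1)=e_1e_1^{\mathsf T}\in\mathbb{R}^{q\times q}$. Let $A_0,A_N\in\mathbb{R}^{s\times s}$, $a,w\in\mathbb{R}^s$ and $\sigma_1,\sigma_N\in\Sigma$ be such that $$A_0V_q=a\,e_1^{\mathsf T}+KV_q\tilde E_q,\qquad A_0^{\mathsf T}V_q+KV_q\tilde E_q=B(\sigma_1)^{\mathsf T}V_qS_q(\sigma_1)\mathcal{P}_q,$$ $$A_NV_q-KV_q\tilde E_q=B(\sigma_N)V_q\mathcal{P}_q^{-1}S_q(\sigma_N)^{-1},\qquad A_N^{\mathsf T}V_q+KV_q\tilde E_q=w\,\mathbb{1}_q^{\mathsf T}.$$ Then $a=A_0\mathbb{1}_s$, $w=A_N^{\mathsf T}\mathbb{1}_s$, and there exist vectors $\phi_0,\phi_N\in\mathbb{R}^s$ such that $$A_0=A+V_s^{-\mathsf T}e_s\,\phi_0^{\mathsf T}V_s^{-1},\qquad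 A_N=A+\phi_N\,e_s^{\mathsf T}V_s^{-1},$$ and, for $j=2,\dots,q$, $$e_j^{\mathsf T}\phi_0=-e_s^{\mathsf T}\mathcal{Q}_{s,q}(1)e_j,\qquad \phi_N^{\mathsf T}V_q\mathcal{P}_q^{-1}e_j=-\hat b_{js}(1),$$ where $\hat b_{js}(1)$ denotes the $(j,s)$ entry of $\hat B(1)=V_s^{\mathsf T}B(1)V_s$.
   Context: Notation: $e_i$ is the $i$-th cardinal basis vector (of the dimension dictated by context), $\mathbb{1}_k=(1,\dots,1)^{\mathsf T}\in\mathbb{R}^k$. For the nodes $\mathbf{c}=(c_1,\dots,c_s)^{\mathsf T}$, $\mathbf{c}^k=(c_1^k,\dots,c_s^k)^{\mathsf T}$, and for $r\le s$ the Vandermonde matrix is $V_r=(\mathbb{1},\mathbf{c},\dots,\mathbf{c}^{r-1})\in\mathbb{R}^{s\times r}$. The Pascal matrix is $\mathcal{P}_r=\big(\binom{j-1}{i-1}\big)_{i,j=1}^r$, the scaled shift matrix is $\tilde E_r=(i\,\delta_{i+1,j})_{i,j=1}^r$, and $S_r(\sigma)=\mathrm{diag}(1,\sigma,\dots,\sigma^{r-1})$. For $r,r'\le s$, $\mathcal{Q}_{r,r'}(\sigma):=V_r^{\mathsf T}B(\sigma)V_{r'}\mathcal{P}_{r'}^{-1}\in\mathbb{R}^{r\times r'}$. These are the order conditions of order $q$ for a Peer two-step method $A Y_n=B(\sigma_n)Y_{n-1}+h_nKF(Y_n)$ with stepsize ratio $\sigma_n=h_n/h_{n-1}$, its discrete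 adjoint, a starting step $A_0Y_0=a\otimes y_0+h_0KF(Y_0)$ and an end step with matrix $A_N$ and output weight $w$. *)

theory Defs
  imports "Jordan_Normal_Form.Matrix"
begin

(* All matrix/vector indices are 0-based (Jordan_Normal_Form convention);
   the paper's index i corresponds to i-1 here. *)

text \<open>Inverse of a square n x n matrix (meaningful when the matrix is invertible).\<close>
definition mat_inv :: "nat \<Rightarrow> real mat \<Rightarrow> real mat" where
  "mat_inv n M = (SOME W. W \<in> carrier_mat n n \<and> M * W = 1\<^sub>m n \<and> W * M = 1\<^sub>m n)"

definition outer :: "real vec \<Rightarrow> real vec \<Rightarrow> real mat" where
  "outer u v = mat (dim_vec u) (dim_vec v) (\<lambda>(i,j). u $ i * v $ j)"

definition ones :: "nat \<Rightarrow> real vec" where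
  "ones k = vec k (\<lambda>_. 1)"

definition Vand :: "real vec \<Rightarrow> nat \<Rightarrow> real mat" where
  "Vand c r = mat (dim_vec c) r (\<lambda>(i,j). (c $ i) ^ j)"

text \<open>Pascal matrix P_r = (binom(j-1,i-1)) (1-based), i.e. binom(j,i) 0-based.\<close>
definition Pascal :: "nat \<Rightarrow> real mat" where
  "Pascal r = mat r r (\<lambda>(i,j). of_nat (j choose i))"

text \<open>Scaled shift matrix E~_r = (i delta_{i+1,j}) (1-based).\<close>
definition Etil :: "nat \<Rightarrow> real mat" where
  "Etil r = mat r r (\<lambda>(i,j). if j = i + 1 then of_nat (i + 1) else 0)"

definition Smat :: "nat \<Rightarrow> real \<Rightarrow> real mat" where
  "Smat r \<sigma> = mat r r (\<lambda>(i,j). if i = j then \<sigma> ^ i else 0)"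

definition Qmat :: "real vec \<Rightarrow> (real \<Rightarrow> real mat) \<Rightarrow> nat \<Rightarrow> nat \<Rightarrow> real \<Rightarrow> real mat" where
  "Qmat c B r r' \<sigma> = transpose_mat (Vand c r) * B \<sigma> * Vand c r' * mat_inv r' (Pascal r')"

end

theory Submission
  imports Defs "Jordan_Normal_Form.Determinant" "HOL-Computational_Algebra.Polynomial"
begin

text \<open>
  Subtracting the order conditions of the standard method from those of the starting and the
  end step gives \<open>(A\<^sub>0 - A)\<^sup>T V\<^sub>q = 0\<close> and \<open>(A\<^sub>N - A) V\<^sub>q = 0\<close>. Since \<open>V\<^sub>q\<close> consists of the
  first \<open>q = s - 1\<close> columns of the invertible Vandermonde matrix \<open>V\<^sub>s\<close>, the matrices
  \<open>V\<^sub>s\<^sup>T (A\<^sub>0 - A) V\<^sub>s\<close> and \<open>(A\<^sub>N - A) V\<^sub>s\<close> vanish outside their last row, resp. last column;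
  this is the rank-one form with \<open>\<phi>\<^sub>0\<close>, \<open>\<phi>\<^sub>N\<close>. The first column of \<open>V\<^sub>q\<close> is \<open>\<one>\<close> and that of
  \<open>E\<^sub>q\<close> is zero, so column 0 of the non-subtracted start and end conditions gives \<open>a\<close> and \<open>w\<close>.
  The other columns give the entries of \<open>\<phi>\<^sub>0\<close> and \<open>\<phi>\<^sub>N\<close>, compared with the standard conditions
  at \<open>\<sigma> = 1\<close>, where \<open>S\<^sub>q = I\<close>; for \<open>\<phi>\<^sub>N\<close> one also uses that the first row of \<open>P\<^sub>q\<close> is \<open>\<one>\<^sup>T\<close>,
  so \<open>\<one>\<^sup>T P\<^sub>q\<^sup>-\<^sup>1 = e\<^sub>1\<^sup>T\<close>.
\<close>

lemma outer_dim [simp]: "dim_row (outer u v) = dim_vec u" "dim_col (outer u v) = dim_vec v"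
  by (simp_all add: outer_def)

lemma index_outer [simp]:
  "i < dim_vec u \<Longrightarrow> j < dim_vec v \<Longrightarrow> outer u v $$ (i, j) = u $ i * v $ j"
  by (simp add: outer_def)

lemma col_outer: "j < dim_vec v \<Longrightarrow> col (outer u v) j = v $ j \<cdot>\<^sub>v u"
  by (rule eq_vecI) (auto simp: outer_def)

lemma transpose_outer: "transpose_mat (outer u v) = outer v u"
  by (rule eq_matI) (auto simp: outer_def)

lemma outer_mult_vec: "dim_vec x = dim_vec v \<Longrightarrow> outer u v *\<^sub>v x = (v \<bullet> x) \<cdot>\<^sub>v u"
  by (rule eq_vecI) (auto simp: outer_def mult_mat_vec_def scalar_prod_def sum_distrib_left ac_simps)

lemma mat_eq_outer_last_col:
  assumes M: "M \<in> carrier_mat m n" and n: "0 < n"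
    and zero: "\<And>j. j < n - 1 \<Longrightarrow> col M j = 0\<^sub>v m"
  shows "M = outer (col M (n - 1)) (unit_vec n (n - 1))"
proof (rule eq_matI)
  fix i j assume "i < dim_row (outer (col M (n - 1)) (unit_vec n (n - 1)))"
    and "j < dim_col (outer (col M (n - 1)) (unit_vec n (n - 1)))"
  then have ij: "i < m" "j < n" using M by auto
  show "M $$ (i, j) = outer (col M (n - 1)) (unit_vec n (n - 1)) $$ (i, j)"
  proof (cases "j = n - 1")
    case False
    then have "M $$ (i, j) = col M j $ i" using ij M by simp
    also have "\<dots> = 0" using zero[of j] False ij by simp
    finally show ?thesis using False ij M by simp
  qed (use ij M n in auto)
qed (use M in auto)

lemma mult_unit_vec_eq_col:
  fixes M :: "'a :: semiring_1 mat"
  assumes "M \<in> carrier_mat m n" "j < n"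
  shows "M *\<^sub>v unit_vec n j = col M j"
  using assms by (intro eq_vecI) (auto simp: scalar_prod_right_unit)

lemma index_transpose_mult:
  assumes "U \<in> carrier_mat n m" "X \<in> carrier_mat n k" "i < m" "j < k"
  shows "(transpose_mat U * X) $$ (i, j) = col U i \<bullet> col X j"
  using assms by simp

lemma add_right_cancel_mat:
  fixes X :: "'a :: group_add mat"
  assumes "X \<in> carrier_mat n m" "Y \<in> carrier_mat n m" "Z \<in> carrier_mat n m" "X + Z = Y + Z"
  shows "X = Y"
proof (rule eq_matI)
  fix i j assume "i < dim_row Y" "j < dim_col Y"
  then show "X $$ (i, j) = Y $$ (i, j)"
    using assms(1-3) arg_cong[OF assms(4), of "\<lambda>M. M $$ (i, j)"] by simp
qed (use assms in auto)

lemma minus_right_cancel_mat: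
  fixes X :: "'a :: group_add mat"
  assumes "X \<in> carrier_mat n m" "Y \<in> carrier_mat n m" "Z \<in> carrier_mat n m" "X - Z = Y - Z"
  shows "X = Y"
proof (rule eq_matI)
  fix i j assume "i < dim_row Y" "j < dim_col Y"
  then show "X $$ (i, j) = Y $$ (i, j)"
    using assms(1-3) arg_cong[OF assms(4), of "\<lambda>M. M $$ (i, j)"] by (simp add: diff_eq_eq)
qed (use assms in auto)

lemma scalar_prod_mult_vec_transpose:
  fixes D :: "'a :: comm_semiring_0 mat"
  assumes D: "D \<in> carrier_mat n m" and V: "V \<in> carrier_mat n k"
    and u: "u \<in> carrier_vec m" and p: "p \<in> carrier_vec k"
  shows "(D *\<^sub>v u) \<bullet> (V *\<^sub>v p) = u \<bullet> ((transpose_mat D * V) *\<^sub>v p)"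
proof -
  have "(D *\<^sub>v u) \<bullet> (V *\<^sub>v p) = (V *\<^sub>v p) \<bullet> (D *\<^sub>v u)"
    using D V u p by (intro comm_scalar_prod[of _ n]) auto
  also have "\<dots> = (transpose_mat D *\<^sub>v (V *\<^sub>v p)) \<bullet> u"
    using D V p u by (intro transpose_vec_mult_scalar[symmetric]) auto
  also have "\<dots> = u \<bullet> ((transpose_mat D * V) *\<^sub>v p)"
    using D V p u by (simp add: comm_scalar_prod[of _ m] assoc_mult_mat_vec[of _ m n _ k])
  finally show ?thesis .
qed

lemma mat_inv_correct:
  fixes M :: "real mat"
  assumes M: "M \<in> carrier_mat n n" and det: "det M \<noteq> 0"
  shows "mat_inv n M \<in> carrier_mat n n" "M * mat_inv n M = 1\<^sub>m n" "mat_inv n M * M = 1\<^sub>m n"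
proof -
  obtain W where W: "W \<in> carrier_mat n n" "W * M = 1\<^sub>m n"
    using det_non_zero_imp_unit[OF M det, of "()"] unfolding Units_def ring_mat_def by auto
  then have "M * W = 1\<^sub>m n"
    using mat_mult_left_right_inverse[OF W(1) M] by simp
  with W have "\<exists>W. W \<in> carrier_mat n n \<and> M * W = 1\<^sub>m n \<and> W * M = 1\<^sub>m n" by blast
  then have "mat_inv n M \<in> carrier_mat n n \<and> M * mat_inv n M = 1\<^sub>m n \<and> mat_inv n M * M = 1\<^sub>m n"
    unfolding mat_inv_def by (rule someI_ex)
  then show "mat_inv n M \<in> carrier_mat n n" "M * mat_inv n M = 1\<^sub>m n" "mat_inv n M * M = 1\<^sub>m n"
    by auto
qed

lemma mat_inv_one: "mat_inv n (1\<^sub>m n) = 1\<^sub>m n"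
  using mat_inv_correct(1,2)[of "1\<^sub>m n" n] by simp

lemma mult_right_inverse:
  fixes D :: "'a :: semiring_1 mat"
  assumes "V \<in> carrier_mat n n" "W \<in> carrier_mat n n" "V * W = 1\<^sub>m n" "D \<in> carrier_mat m n"
  shows "D * V * W = D"
  using assms by (simp add: assoc_mult_mat[of D m n V n W n] right_mult_one_mat[OF assms(4)])

lemma transpose_conj_inverse:
  fixes D :: "'a :: comm_semiring_1 mat"
  assumes V: "V \<in> carrier_mat n n" and W: "W \<in> carrier_mat n n" and VW: "V * W = 1\<^sub>m n"
    and D: "D \<in> carrier_mat n n"
  shows "transpose_mat W * (transpose_mat V * D * V) * W = D"
proof -
  have "transpose_mat W * (transpose_mat V * D * V) * W
      = (transpose_mat W * transpose_mat V) * D * (V * W)"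
    using V W D by (simp add: assoc_mult_mat[of _ n n _ n _ n])
  also have "transpose_mat W * transpose_mat V = 1\<^sub>m n"
    using transpose_mult[OF V W] VW by simp
  finally show ?thesis using VW D by simp
qed

lemma Smat_one: "Smat r 1 = 1\<^sub>m r"
  by (rule eq_matI) (auto simp: Smat_def)

lemma Etil_dim [simp]: "dim_row (Etil r) = r" "dim_col (Etil r) = r"
  by (simp_all add: Etil_def)

lemma Etil_carrier [simp]: "Etil r \<in> carrier_mat r r"
  by (simp add: Etil_def)

lemma col_mult_Etil_0:
  assumes "M \<in> carrier_mat m r" "0 < r"
  shows "col (M * Etil r) 0 = 0\<^sub>v m"
proof -
  have "col (Etil r) 0 = 0\<^sub>v r" using assms(2) by (intro eq_vecI) (auto simp: Etil_def)
  then show ?thesis using assms col_mult2[of M m r "Etil r" r 0] by auto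
qed

lemma Pascal_dim [simp]: "dim_row (Pascal r) = r" "dim_col (Pascal r) = r"
  by (simp_all add: Pascal_def)

lemma Pascal_carrier [simp]: "Pascal r \<in> carrier_mat r r"
  by (simp add: Pascal_def)

lemma det_Pascal: "det (Pascal r) = 1"
proof -
  have "det (Pascal r) = prod_list (diag_mat (Pascal r))"
    by (rule det_upper_triangular) (auto simp: Pascal_def upper_triangular_def)
  also have "diag_mat (Pascal r) = replicate r 1"
    by (auto simp: diag_mat_def Pascal_def intro!: nth_equalityI)
  finally show ?thesis by simp
qed

lemma Pascal_inv_carrier [simp]: "mat_inv r (Pascal r) \<in> carrier_mat r r"
  and Pascal_Pascal_inv: "Pascal r * mat_inv r (Pascal r) = 1\<^sub>m r"
  using mat_inv_correct[OF Pascal_carrier, of r] det_Pascal by auto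

lemma Pascal_inv_dim [simp]:
  "dim_row (mat_inv r (Pascal r)) = r" "dim_col (mat_inv r (Pascal r)) = r"
  by (rule carrier_matD[OF Pascal_inv_carrier])+

lemma row_0_Pascal: "0 < r \<Longrightarrow> row (Pascal r) 0 = ones r"
  by (rule eq_vecI) (auto simp: Pascal_def ones_def)

lemma ones_scalar_prod_col_Pascal_inv:
  assumes "j < r"
  shows "ones r \<bullet> col (mat_inv r (Pascal r)) j = (if j = 0 then 1 else 0)"
proof -
  have "ones r \<bullet> col (mat_inv r (Pascal r)) j = (Pascal r * mat_inv r (Pascal r)) $$ (0, j)"
    using assms by (subst index_mult_mat) (auto simp: row_0_Pascal ones_def)
  also have "\<dots> = (if j = 0 then 1 else 0)"
    using assms by (simp add: Pascal_Pascal_inv)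
  finally show ?thesis .
qed

lemma outer_ones_mult_col_Pascal_inv:
  assumes "1 \<le> j" "j < r"
  shows "outer w (ones r) *\<^sub>v col (mat_inv r (Pascal r)) j = 0\<^sub>v (dim_vec w)"
  using assms ones_scalar_prod_col_Pascal_inv[of j r]
  by (intro eq_vecI) (auto simp: outer_mult_vec ones_def)

lemma mult_Pascal_mult_col_Pascal_inv:
  assumes M: "M \<in> carrier_mat n r" and j: "j < r"
  shows "(M * Pascal r) *\<^sub>v col (mat_inv r (Pascal r)) j = col M j"
proof -
  have "(M * Pascal r) *\<^sub>v col (mat_inv r (Pascal r)) j = M *\<^sub>v col (Pascal r * mat_inv r (Pascal r)) j"
    using M j by (simp add: assoc_mult_mat_vec[of _ n r _ r] col_mult2[of _ r r _ r j])
  also have "\<dots> = col M j"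
    using M j by (simp add: Pascal_Pascal_inv mult_unit_vec_eq_col)
  finally show ?thesis .
qed

lemma Vand_dim [simp]: "dim_row (Vand c r) = dim_vec c" "dim_col (Vand c r) = r"
  by (simp_all add: Vand_def)

lemma Vand_carrier: "Vand c r \<in> carrier_mat (dim_vec c) r"
  by (rule carrier_matI) simp_all

lemma col_Vand: "j < r \<Longrightarrow> col (Vand c r) j = vec (dim_vec c) (\<lambda>k. c $ k ^ j)"
  by (rule eq_vecI) (auto simp: Vand_def)

lemma col_Vand_0: "0 < r \<Longrightarrow> col (Vand c r) 0 = ones (dim_vec c)"
  by (simp add: col_Vand ones_def)

lemma col_Vand_prefix: "j < r \<Longrightarrow> j < r' \<Longrightarrow> col (Vand c r) j = col (Vand c r') j"
  by (simp add: col_Vand)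

lemma col_0_mult_Vand:
  assumes "M \<in> carrier_mat m (dim_vec c)" "0 < r"
  shows "col (M * Vand c r) 0 = M *\<^sub>v ones (dim_vec c)"
proof -
  have "col (M * Vand c r) 0 = M *\<^sub>v col (Vand c r) 0"
    by (rule col_mult2[OF assms(1) Vand_carrier assms(2)])
  then show ?thesis using assms(2) by (simp add: col_Vand_0)
qed

lemma det_Vand_nonzero:
  assumes dim: "dim_vec c = s"
    and dist: "\<And>i j. i < s \<Longrightarrow> j < s \<Longrightarrow> i \<noteq> j \<Longrightarrow> c $ i \<noteq> c $ j"
  shows "det (Vand c s) \<noteq> 0"
proof
  assume "det (Vand c s) = 0"
  then obtain v where v: "v \<in> carrier_vec s" "v \<noteq> 0\<^sub>v s" "Vand c s *\<^sub>v v = 0\<^sub>v s"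
    using det_0_iff_vec_prod_zero_field[of "Vand c s" s] dim by (auto simp: Vand_def)
  \<comment> \<open>the kernel vector \<open>v\<close> gives a polynomial of degree \<open>< s\<close> vanishing at the \<open>s\<close> distinct nodes\<close>
  define p where "p = (\<Sum>i<s. monom (v $ i) i)"
  have roots: "poly p (c $ k) = 0" if k: "k < s" for k
  proof -
    have "(Vand c s *\<^sub>v v) $ k = 0" using v(3) k by simp
    then have "(\<Sum>i<s. (c $ k) ^ i * v $ i) = 0"
      using k dim v(1) by (simp add: Vand_def scalar_prod_def row_def lessThan_atLeast0)
    then show ?thesis by (simp add: p_def poly_sum poly_monom mult.commute)
  qed
  have "0 < s" using v(1,2) by (cases s) auto
  moreover have "degree p \<le> s - 1"
    unfolding p_def by (rule degree_sum_le) (auto intro: order.trans[OF degree_monom_le])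
  ultimately have deg: "degree p < s" by linarith
  have "inj_on (\<lambda>k. c $ k) {..<s}" using dist by (auto simp: inj_on_def)
  then have "card ((\<lambda>k. c $ k) ` {..<s}) = s" by (simp add: card_image)
  then have "p = 0"
    using roots deg by (intro poly_eqI_degree[of "(\<lambda>k. c $ k) ` {..<s}"]) auto
  moreover have "coeff p i = v $ i" if "i < s" for i
    using that unfolding p_def coeff_sum by (simp add: sum.delta)
  ultimately have "v $ i = 0" if "i < s" for i
    using that by simp
  then have "v = 0\<^sub>v s" using v(1) by (intro eq_vecI) auto
  with v(2) show False by simp
qed

locale distinct_nodes =
  fixes c :: "real vec" and s q :: nat
  assumes dim_nodes [simp]: "dim_vec c = s" and two_le_s: "2 \<le> s" and q_def: "q = s - 1"
    and nodes_distinct: "\<And>i j. i < s \<Longrightarrow> j < s \<Longrightarrow> i \<noteq> j \<Longrightarrow> c $ i \<noteq> c $ j"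
begin

abbreviation "Vq \<equiv> Vand c q"
abbreviation "Vs \<equiv> Vand c s"
abbreviation "Vinv \<equiv> mat_inv s Vs"
abbreviation "e_last \<equiv> unit_vec s q"

lemma q_pos: "0 < q" and q_less: "q < s"
  using two_le_s q_def by auto

lemma Vand_carrier_nodes [simp]: "Vand c r \<in> carrier_mat s r"
  using Vand_carrier[of c r] by simp

lemma Vinv_carrier [simp]: "Vinv \<in> carrier_mat s s"
  and Vs_Vinv: "Vs * Vinv = 1\<^sub>m s"
  using mat_inv_correct[OF Vand_carrier_nodes det_Vand_nonzero[OF dim_nodes nodes_distinct]]
  by auto

lemma mult_Vs_eq_outer_last:
  assumes D: "D \<in> carrier_mat m s" and ker: "D * Vq = 0\<^sub>m m q"
  shows "\<exists>\<phi> \<in> carrier_vec m. D * Vs = outer \<phi> e_last"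
proof
  have "col (D * Vs) j = 0\<^sub>v m" if "j < q" for j
  proof -
    have "col (D * Vs) j = D *\<^sub>v col Vs j"
      using that q_less D by (intro col_mult2[of D m s Vs s j]) auto
    also have "\<dots> = D *\<^sub>v col Vq j"
      using that q_less by (simp add: col_Vand_prefix[of j q s])
    also have "\<dots> = col (D * Vq) j"
      using that D by (intro col_mult2[symmetric]) auto
    finally show ?thesis using ker that by simp
  qed
  then show "D * Vs = outer (col (D * Vs) q) e_last"
    using mat_eq_outer_last_col[of "D * Vs" m s] D q_def q_pos by auto
qed (use D q_less in auto)

lemma transpose_Vs_mult_Vs_eq_outer_last:
  assumes D: "D \<in> carrier_mat s s" and ker: "transpose_mat D * Vq = 0\<^sub>m s q"
  shows "\<exists>\<phi> \<in> carrier_vec s. transpose_mat Vs * D * Vs = outer e_last \<phi>"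
proof -
  let ?D' = "transpose_mat Vs * transpose_mat D"
  have D': "?D' \<in> carrier_mat s s"
    using D by (simp add: mult_carrier_mat[of _ s s _ s])
  have "?D' * Vq = transpose_mat Vs * (transpose_mat D * Vq)"
    using D by (simp add: assoc_mult_mat[of _ s s _ s _ q])
  also have "\<dots> = 0\<^sub>m s q" using ker by simp
  finally obtain \<phi> where \<phi>: "\<phi> \<in> carrier_vec s" and eq: "?D' * Vs = outer \<phi> e_last"
    using mult_Vs_eq_outer_last[OF D'] by blast
  have "transpose_mat Vs * D * Vs = transpose_mat (?D' * Vs)"
    using D by (simp add: transpose_mult[of _ s s _ s] assoc_mult_mat[of _ s s _ s _ s])
  also have "\<dots> = outer e_last \<phi>" using eq transpose_outer by simp
  finally show ?thesis using \<phi> by blast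
qed

lemma mult_Vq_zero_imp_rank_one:
  assumes D: "D \<in> carrier_mat m s" and ker: "D * Vq = 0\<^sub>m m q"
  shows "D = outer (D *\<^sub>v col Vs q) e_last * Vinv"
proof -
  obtain \<phi> where DVs: "D * Vs = outer \<phi> e_last"
    using mult_Vs_eq_outer_last[OF D ker] by blast
  have "\<phi> = col (outer \<phi> e_last) q" using q_less by (simp add: col_outer)
  also have "\<dots> = D *\<^sub>v col Vs q"
    using D q_less by (simp add: DVs[symmetric] col_mult2[of D m s Vs s q])
  finally show ?thesis
    using mult_right_inverse[OF Vand_carrier_nodes Vinv_carrier Vs_Vinv D] DVs by simp
qed

lemma transpose_mult_Vq_zero_imp_rank_one:
  assumes D: "D \<in> carrier_mat s s" and ker: "transpose_mat D * Vq = 0\<^sub>m s q"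
  shows "D = transpose_mat Vinv * outer e_last (vec s (\<lambda>j. col Vs q \<bullet> (D *\<^sub>v col Vs j))) * Vinv"
proof -
  obtain \<phi> where \<phi>: "\<phi> \<in> carrier_vec s" and M: "transpose_mat Vs * D * Vs = outer e_last \<phi>"
    using transpose_Vs_mult_Vs_eq_outer_last[OF D ker] by blast
  have "\<phi> = vec s (\<lambda>j. col Vs q \<bullet> (D *\<^sub>v col Vs j))"
  proof (rule eq_vecI)
    fix j assume "j < dim_vec (vec s (\<lambda>j. col Vs q \<bullet> (D *\<^sub>v col Vs j)))"
    then have j: "j < s" by simp
    have "\<phi> $ j = (transpose_mat Vs * (D * Vs)) $$ (q, j)"
      using M D j q_less \<phi> by (simp add: assoc_mult_mat[of _ s s _ s _ s])
    also have "\<dots> = col Vs q \<bullet> (D *\<^sub>v col Vs j)"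
      using D j q_less by (simp add: index_transpose_mult[of _ s s _ s] col_mult2[of D s s Vs s j])
    finally show "\<phi> $ j = vec s (\<lambda>j. col Vs q \<bullet> (D *\<^sub>v col Vs j)) $ j" using j by simp
  qed (use \<phi> in auto)
  then show ?thesis using transpose_conj_inverse[OF _ Vinv_carrier Vs_Vinv D] M by simp
qed

lemma mult_Vq_Etil_carrier: "K \<in> carrier_mat m s \<Longrightarrow> K * Vq * Etil q \<in> carrier_mat m q"
  by (intro mult_carrier_mat[of _ m q] mult_carrier_mat[of _ m s]) auto

lemma start_weight:
  assumes A0: "A0 \<in> carrier_mat s s" and K: "K \<in> carrier_mat s s" and a: "a \<in> carrier_vec s"
    and start: "A0 * Vq = outer a (unit_vec q 0) + K * Vq * Etil q"
  shows "a = A0 *\<^sub>v ones s"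
proof -
  have "A0 *\<^sub>v ones s = col (A0 * Vq) 0"
    using col_0_mult_Vand[of A0 s c q] A0 q_pos by simp
  also have "\<dots> = col (outer a (unit_vec q 0)) 0 + col (K * Vq * Etil q) 0"
    unfolding start using a K q_pos mult_Vq_Etil_carrier by (intro col_add) auto
  also have "\<dots> = a"
    using a K q_pos by (simp add: col_outer col_mult_Etil_0[of _ s q])
  finally show ?thesis by simp
qed

lemma end_weight:
  assumes AN: "AN \<in> carrier_mat s s" and K: "K \<in> carrier_mat s s" and w: "w \<in> carrier_vec s"
    and end_adj: "transpose_mat AN * Vq + K * Vq * Etil q = outer w (ones q)"
  shows "w = transpose_mat AN *\<^sub>v ones s"
proof -
  have "w = col (outer w (ones q)) 0"
    using w q_pos by (simp add: col_outer ones_def)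
  also have "\<dots> = col (transpose_mat AN * Vq) 0 + col (K * Vq * Etil q) 0"
    unfolding end_adj[symmetric] using AN K q_pos mult_Vq_Etil_carrier by (intro col_add) auto
  also have "\<dots> = transpose_mat AN *\<^sub>v ones s"
    using AN K q_pos col_0_mult_Vand[of "transpose_mat AN" s c q]
    by (simp add: col_mult_Etil_0[of _ s q] carrier_vecI)
  finally show ?thesis .
qed

lemma start_diff_mult_Vq:
  assumes A: "A \<in> carrier_mat s s" and K: "K \<in> carrier_mat s s" and A0: "A0 \<in> carrier_mat s s"
    and B1: "B1 \<in> carrier_mat s s" and a: "a \<in> carrier_vec s"
    and order_fw: "A * Vq - K * Vq * Etil q = B1 * Vq * mat_inv q (Pascal q)"
    and start: "A0 * Vq = outer a (unit_vec q 0) + K * Vq * Etil q"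
  shows "(A0 - A) * Vq = outer a (unit_vec q 0) - B1 * Vq * mat_inv q (Pascal q)"
proof -
  let ?R = "outer a (unit_vec q 0) - B1 * Vq * mat_inv q (Pascal q)"
  have "(A0 - A) * Vq = A0 * Vq - A * Vq"
    using A0 A by (intro minus_mult_distrib_mat) auto
  also have "\<dots> = ?R"
  proof (rule eq_matI)
    fix i j assume "i < dim_row ?R" and "j < dim_col ?R"
    then have "i < s" "j < q" using a B1 by auto
    then show "(A0 * Vq - A * Vq) $$ (i, j) = ?R $$ (i, j)"
      using A A0 K B1 a mult_Vq_Etil_carrier[OF K] arg_cong[OF start, of "\<lambda>M. M $$ (i, j)"]
        arg_cong[OF order_fw, of "\<lambda>M. M $$ (i, j)"]
      by (simp add: carrier_matD)
  qed (use A0 A B1 a in auto)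
  finally show ?thesis .
qed

lemma end_diff_transpose_mult_Vq:
  assumes A: "A \<in> carrier_mat s s" and K: "K \<in> carrier_mat s s" and AN: "AN \<in> carrier_mat s s"
    and B1: "B1 \<in> carrier_mat s s" and w: "w \<in> carrier_vec s"
    and order_adj: "transpose_mat A * Vq + K * Vq * Etil q = transpose_mat B1 * Vq * Pascal q"
    and end_adj: "transpose_mat AN * Vq + K * Vq * Etil q = outer w (ones q)"
  shows "transpose_mat (AN - A) * Vq = outer w (ones q) - transpose_mat B1 * Vq * Pascal q"
proof -
  let ?R = "outer w (ones q) - transpose_mat B1 * Vq * Pascal q"
  have "transpose_mat (AN - A) * Vq = transpose_mat AN * Vq - transpose_mat A * Vq"
    unfolding transpose_minus[OF AN A] using AN A by (intro minus_mult_distrib_mat) auto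
  also have "\<dots> = ?R"
  proof (rule eq_matI)
    fix i j assume "i < dim_row ?R" and "j < dim_col ?R"
    then have "i < s" "j < q" using w B1 by (auto simp: ones_def)
    then show "(transpose_mat AN * Vq - transpose_mat A * Vq) $$ (i, j) = ?R $$ (i, j)"
      using A AN K B1 w mult_Vq_Etil_carrier[OF K] arg_cong[OF end_adj, of "\<lambda>M. M $$ (i, j)"]
        arg_cong[OF order_adj, of "\<lambda>M. M $$ (i, j)"]
      by (simp add: carrier_matD ones_def)
  qed (use AN A B1 w in \<open>auto simp: ones_def\<close>)
  finally show ?thesis .
qed

lemma start_correction_entry:
  assumes D: "D \<in> carrier_mat s s" and B1: "B1 \<in> carrier_mat s s" and a: "a \<in> carrier_vec s"
    and DVq: "D * Vq = outer a (unit_vec q 0) - B1 * Vq * mat_inv q (Pascal q)"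
    and j: "1 \<le> j" "j < q"
  shows "col Vs q \<bullet> (D *\<^sub>v col Vs j) = - (transpose_mat Vs * B1 * Vq * mat_inv q (Pascal q)) $$ (q, j)"
proof -
  let ?Pinv = "mat_inv q (Pascal q)"
  have "D *\<^sub>v col Vs j = col (D * Vq) j"
    using D j q_less by (simp add: col_mult2[of D s s Vq q j] col_Vand_prefix[of j q s])
  also have "\<dots> = - col (B1 * Vq * ?Pinv) j"
    unfolding DVq using B1 j a by (intro eq_vecI) (auto simp: carrier_matD)
  also have "col Vs q \<bullet> - col (B1 * Vq * ?Pinv) j = - (transpose_mat Vs * (B1 * Vq * ?Pinv)) $$ (q, j)"
    using B1 j q_less by (simp add: index_transpose_mult[of _ s s _ q])
  also have "transpose_mat Vs * (B1 * Vq * ?Pinv) = transpose_mat Vs * B1 * Vq * ?Pinv"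
    using B1 by (simp add: assoc_mult_mat[of _ s s _ s _ q] assoc_mult_mat[of _ s s _ q _ q])
  finally show ?thesis .
qed

lemma end_correction_entry:
  assumes D: "D \<in> carrier_mat s s" and B1: "B1 \<in> carrier_mat s s" and w: "w \<in> carrier_vec s"
    and DVq: "transpose_mat D * Vq = outer w (ones q) - transpose_mat B1 * Vq * Pascal q"
    and j: "1 \<le> j" "j < q"
  shows "(D *\<^sub>v col Vs q) \<bullet> col (Vq * mat_inv q (Pascal q)) j = - (transpose_mat Vs * B1 * Vs) $$ (j, q)"
proof -
  let ?u = "col Vs q" and ?p = "col (mat_inv q (Pascal q)) j"
  have "(D *\<^sub>v ?u) \<bullet> col (Vq * mat_inv q (Pascal q)) j = (D *\<^sub>v ?u) \<bullet> (Vq *\<^sub>v ?p)"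
    using j by (simp add: col_mult2[of Vq s q _ q j])
  also have "\<dots> = ?u \<bullet> ((transpose_mat D * Vq) *\<^sub>v ?p)"
    by (rule scalar_prod_mult_vec_transpose[OF D Vand_carrier_nodes]) (use j q_less in simp_all)
  also have "(transpose_mat D * Vq) *\<^sub>v ?p
      = outer w (ones q) *\<^sub>v ?p - (transpose_mat B1 * Vq * Pascal q) *\<^sub>v ?p"
    unfolding DVq using B1 w j
    by (intro minus_mult_distrib_mat_vec) (auto simp: ones_def carrier_matD intro!: carrier_matI)
  also have "\<dots> = 0\<^sub>v s - col (transpose_mat B1 * Vq) j"
    using B1 w j outer_ones_mult_col_Pascal_inv[of j q w]
    by (simp add: mult_Pascal_mult_col_Pascal_inv[of _ s q j])
  also have "\<dots> = - (transpose_mat B1 *\<^sub>v col Vs j)"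
    using B1 j q_less by (intro eq_vecI) (auto simp: carrier_matD col_Vand_prefix[of j q s])
  also have "?u \<bullet> - (transpose_mat B1 *\<^sub>v col Vs j) = - ((transpose_mat B1 *\<^sub>v col Vs j) \<bullet> ?u)"
    using B1 q_less by (subst comm_scalar_prod[of ?u s]) (auto simp: carrier_vecI carrier_matD)
  also have "(transpose_mat B1 *\<^sub>v col Vs j) \<bullet> ?u = col Vs j \<bullet> (B1 *\<^sub>v ?u)"
    by (rule transpose_vec_mult_scalar[OF B1]) (use j q_less in \<open>auto simp: carrier_vecI\<close>)
  also have "col Vs j \<bullet> (B1 *\<^sub>v ?u) = (transpose_mat Vs * B1 * Vs) $$ (j, q)"
    using B1 j q_less
    by (simp add: assoc_mult_mat[of _ s s _ s _ s] index_transpose_mult[of _ s s _ s]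
        col_mult2[of B1 s s Vs s q])
  finally show ?thesis .
qed

lemma start_correction:
  assumes A: "A \<in> carrier_mat s s" and K: "K \<in> carrier_mat s s" and A0: "A0 \<in> carrier_mat s s"
    and B1: "B1 \<in> carrier_mat s s" and a: "a \<in> carrier_vec s"
    and order_fw: "A * Vq - K * Vq * Etil q = B1 * Vq * mat_inv q (Pascal q)"
    and start: "A0 * Vq = outer a (unit_vec q 0) + K * Vq * Etil q"
    and start_adj: "transpose_mat A0 * Vq + K * Vq * Etil q = transpose_mat A * Vq + K * Vq * Etil q"
  shows "\<exists>\<phi>0 \<in> carrier_vec s. A0 = A + transpose_mat Vinv * outer e_last \<phi>0 * Vinv \<and>
    (\<forall>j. 1 \<le> j \<and> j < q \<longrightarrow>
      \<phi>0 $ j = - (transpose_mat Vs * B1 * Vq * mat_inv q (Pascal q)) $$ (q, j))"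
proof -
  define D where "D = A0 - A"
  define \<phi>0 where "\<phi>0 = vec s (\<lambda>j. col Vs q \<bullet> (D *\<^sub>v col Vs j))"
  have D: "D \<in> carrier_mat s s" using A0 A by (simp add: D_def minus_carrier_mat)
  have DVq: "D * Vq = outer a (unit_vec q 0) - B1 * Vq * mat_inv q (Pascal q)"
    unfolding D_def by (rule start_diff_mult_Vq[OF A K A0 B1 a order_fw start])
  have "transpose_mat A0 * Vq = transpose_mat A * Vq"
    using start_adj by (rule add_right_cancel_mat[rotated 3])
      (use A0 A mult_Vq_Etil_carrier[OF K] in \<open>simp_all add: mult_carrier_mat[of _ s s]\<close>)
  moreover have "transpose_mat D * Vq = transpose_mat A0 * Vq - transpose_mat A * Vq"
    unfolding D_def transpose_minus[OF A0 A] using A0 A by (intro minus_mult_distrib_mat) auto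
  ultimately have "transpose_mat D * Vq = 0\<^sub>m s q" using A by simp
  then have "D = transpose_mat Vinv * outer e_last \<phi>0 * Vinv"
    unfolding \<phi>0_def by (rule transpose_mult_Vq_zero_imp_rank_one[OF D])
  moreover have "A0 = A + D" using A0 A by (auto simp: D_def)
  moreover have "\<phi>0 $ j = - (transpose_mat Vs * B1 * Vq * mat_inv q (Pascal q)) $$ (q, j)"
    if "1 \<le> j" "j < q" for j
    using that q_less start_correction_entry[OF D B1 a DVq that] by (simp add: \<phi>0_def)
  moreover have "\<phi>0 \<in> carrier_vec s" by (simp add: \<phi>0_def)
  ultimately show ?thesis by (intro bexI[of _ \<phi>0]) auto
qed

lemma end_correction:
  assumes A: "A \<in> carrier_mat s s" and K: "K \<in> carrier_mat s s" and AN: "AN \<in> carrier_mat s s"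
    and B1: "B1 \<in> carrier_mat s s" and w: "w \<in> carrier_vec s"
    and order_adj: "transpose_mat A * Vq + K * Vq * Etil q = transpose_mat B1 * Vq * Pascal q"
    and end_fw: "AN * Vq - K * Vq * Etil q = A * Vq - K * Vq * Etil q"
    and end_adj: "transpose_mat AN * Vq + K * Vq * Etil q = outer w (ones q)"
  shows "\<exists>\<phi>N \<in> carrier_vec s. AN = A + outer \<phi>N e_last * Vinv \<and>
    (\<forall>j. 1 \<le> j \<and> j < q \<longrightarrow>
      \<phi>N \<bullet> col (Vq * mat_inv q (Pascal q)) j = - (transpose_mat Vs * B1 * Vs) $$ (j, q))"
proof -
  define D where "D = AN - A"
  have D: "D \<in> carrier_mat s s" using AN A by (simp add: D_def minus_carrier_mat)
  have DVq: "transpose_mat D * Vq = outer w (ones q) - transpose_mat B1 * Vq * Pascal q"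
    unfolding D_def by (rule end_diff_transpose_mult_Vq[OF A K AN B1 w order_adj end_adj])
  have "AN * Vq = A * Vq"
    using end_fw by (rule minus_right_cancel_mat[rotated 3])
      (use AN A mult_Vq_Etil_carrier[OF K] in \<open>simp_all add: mult_carrier_mat[of _ s s]\<close>)
  moreover have "D * Vq = AN * Vq - A * Vq"
    unfolding D_def using AN A by (intro minus_mult_distrib_mat) auto
  ultimately have "D * Vq = 0\<^sub>m s q" using A by simp
  then have "D = outer (D *\<^sub>v col Vs q) e_last * Vinv"
    by (rule mult_Vq_zero_imp_rank_one[OF D])
  moreover have "AN = A + D" using AN A by (auto simp: D_def)
  moreover have "D *\<^sub>v col Vs q \<in> carrier_vec s" using D by (simp add: carrier_vecI carrier_matD)
  moreover note end_correction_entry[OF D B1 w DVq]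
  ultimately show ?thesis by (intro bexI[of _ "D *\<^sub>v col Vs q"]) auto
qed

end

theorem lemma1:
  fixes s q :: nat and c a w :: "real vec" and A K A0 AN :: "real mat"
    and B :: "real \<Rightarrow> real mat" and \<Sigma> :: "real set" and \<sigma>1 \<sigma>N :: real
  assumes s2: "s \<ge> 2" and q_def: "q = s - 1"
    and c_dim: "dim_vec c = s"
    and c_dist: "\<And>i j. i < s \<Longrightarrow> j < s \<Longrightarrow> i \<noteq> j \<Longrightarrow> c $ i \<noteq> c $ j"
    and A_car: "A \<in> carrier_mat s s" and K_car: "K \<in> carrier_mat s s"
    and B_car: "\<And>\<sigma>. \<sigma> \<in> \<Sigma> \<Longrightarrow> B \<sigma> \<in> carrier_mat s s"
    and Sigma_pos: "\<Sigma> \<subseteq> {0<..}" and one_Sigma: "1 \<in> \<Sigma>"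
    and order_fw: "\<And>\<sigma>. \<sigma> \<in> \<Sigma> \<Longrightarrow>
        A * Vand c q - K * Vand c q * Etil q
          = B \<sigma> * Vand c q * mat_inv q (Pascal q) * mat_inv q (Smat q \<sigma>)"
    and order_adj: "\<And>\<sigma>. \<sigma> \<in> \<Sigma> \<Longrightarrow>
        transpose_mat A * Vand c q + K * Vand c q * Etil q
          = transpose_mat (B \<sigma>) * Vand c q * Smat q \<sigma> * Pascal q"
    and Q1: "Qmat c B q q 1 = outer (unit_vec q 0) (unit_vec q 0)"
    and A0_car: "A0 \<in> carrier_mat s s" and AN_car: "AN \<in> carrier_mat s s"
    and a_car: "a \<in> carrier_vec s" and w_car: "w \<in> carrier_vec s"
    and s1: "\<sigma>1 \<in> \<Sigma>" and sN: "\<sigma>N \<in> \<Sigma>"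
    and start1: "A0 * Vand c q = outer a (unit_vec q 0) + K * Vand c q * Etil q"
    and start2: "transpose_mat A0 * Vand c q + K * Vand c q * Etil q
          = transpose_mat (B \<sigma>1) * Vand c q * Smat q \<sigma>1 * Pascal q"
    and end1: "AN * Vand c q - K * Vand c q * Etil q
          = B \<sigma>N * Vand c q * mat_inv q (Pascal q) * mat_inv q (Smat q \<sigma>N)"
    and end2: "transpose_mat AN * Vand c q + K * Vand c q * Etil q = outer w (ones q)"
  shows "a = A0 *\<^sub>v ones s \<and> w = transpose_mat AN *\<^sub>v ones s \<and>
    (\<exists>\<phi>0 \<phi>N. \<phi>0 \<in> carrier_vec s \<and> \<phi>N \<in> carrier_vec s \<and>
      A0 = A + transpose_mat (mat_inv s (Vand c s)) * outer (unit_vec s (s - 1)) \<phi>0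
                 * mat_inv s (Vand c s) \<and>
      AN = A + outer \<phi>N (unit_vec s (s - 1)) * mat_inv s (Vand c s) \<and>
      (\<forall>j. 1 \<le> j \<and> j < q \<longrightarrow>
         \<phi>0 $ j = - (Qmat c B s q 1 $$ (s - 1, j)) \<and>
         scalar_prod \<phi>N (col (Vand c q * mat_inv q (Pascal q)) j)
           = - ((transpose_mat (Vand c s) * B 1 * Vand c s) $$ (j, s - 1))))"
proof -
  interpret distinct_nodes c s q
    using c_dim s2 q_def c_dist by unfold_locales
  have B1: "B 1 \<in> carrier_mat s s" using B_car[OF one_Sigma] .
  have order_fw1: "A * Vq - K * Vq * Etil q = B 1 * Vq * mat_inv q (Pascal q)"
    using order_fw[OF one_Sigma] B1 by (simp add: Smat_one mat_inv_one)
  have order_adj1: "transpose_mat A * Vq + K * Vq * Etil q = transpose_mat (B 1) * Vq * Pascal q"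
    using order_adj[OF one_Sigma] B1 by (simp add: Smat_one)
  obtain \<phi>0 where "\<phi>0 \<in> carrier_vec s" "A0 = A + transpose_mat Vinv * outer e_last \<phi>0 * Vinv"
    "\<forall>j. 1 \<le> j \<and> j < q \<longrightarrow> \<phi>0 $ j = - Qmat c B s q 1 $$ (q, j)"
    using start_correction[OF A_car K_car A0_car B1 a_car order_fw1 start1
        trans[OF start2 order_adj[OF s1, symmetric]]]
    unfolding Qmat_def by blast
  moreover obtain \<phi>N where "\<phi>N \<in> carrier_vec s" "AN = A + outer \<phi>N e_last * Vinv"
    "\<forall>j. 1 \<le> j \<and> j < q \<longrightarrow>
      \<phi>N \<bullet> col (Vq * mat_inv q (Pascal q)) j = - (transpose_mat Vs * B 1 * Vs) $$ (j, q)"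
    using end_correction[OF A_car K_car AN_car B1 w_car order_adj1
        trans[OF end1 order_fw[OF sN, symmetric]] end2] by blast
  moreover have "a = A0 *\<^sub>v ones s" using start_weight[OF A0_car K_car a_car start1] .
  moreover have "w = transpose_mat AN *\<^sub>v ones s" using end_weight[OF AN_car K_car w_car end2] .
  ultimately show ?thesis unfolding q_def[symmetric] by blast
qed

end
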